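(* Let $\mathcal{R}$ be a left-connected rewriting system over a signature $\Sigma$, let $L_1$ and $L_2$ be the left-hand sides of two rules of $\mathcal{R}$, and let $(g_1,g_2\colon G\to L_1+L_2)$ be a gluing scheme that yields a pre-critical pair. If a node $A$ of $L_1$ and a node $B$ of $L_2$ are glued, then one of the following holds: (a) there are glued hyperedges $e_1$ of $L_1$ and $e_2$ of $L_2$ and an index $k$ such that $A$ is the $k$-th source of $e_1$ and $B$ is the $k$-th source of $e_2$; (b) there are glued hyperedges $e_1$ of $L_1$ and $e_2$ of $L_2$ and an index $i$ such that $A$ is the $i$-th target of $e_1$ and $B$ is the $i$-th target of $e_2$; (c) $A\in out(L_1)$ and $B\in in(L_2)$; (d) $A\in in(L_1)$ and $B\in out(L_2)$.
   Context: A signature $\Sigma$ is a set of triples $(x,n,m)$ (label, arity, coarity). A $\Sigma$-hypergraph $G=(V,E,s,t,l)$ has finite sets $V$ (nodes), $E$ (hyperedges), maps $s,t\colon E\to V^*$ (lists of sources/targets) and a labelling $l\colon E\to\Sigma$ sending a hyperedge with $n$ sources and $m$ targets to some $(x,n,m)$. Morphisms $f=(f_V,f_E)$ preserve sources, targets and labels; they form the category $\mathbf{Hyp}_\Sigma$, where colimits are computed componentwise and monos/epis are injective/surjective on nodes and hyperedges. Composition is written $f;g$; $\iota_1,\iota_2$ are coprojections. A hypergraph is discrete if it has no hyperedges. A path is a list of hyperedges $[e_1,\dots,e_n]$ with some target of $e_k$ equal to a source of $e_{k+1}$ for each $k$; it goes from $v$ to $v'$ if $v$ is a source of $e_1$ and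 $v'$ a target of $e_n$; a cycle is a path with some source of $e_1$ a target of $e_n$. In-degree (out-degree) of a node $v$: number of pairs $(e,i)$ with $v$ the $i$-th target (source) of $e$; $in(H)$, $out(H)$: nodes of in-degree $0$, out-degree $0$. $H$ is ma (monogamous acyclic) if it has no cycle and all in- and out-degrees are $\le 1$. A cospan $I\to H\leftarrow O$ with $I,O$ discrete is an ma-cospan if $H$ is ma and the legs are mono with images $in(H)$ and $out(H)$. $H$ is strongly connected if for all $x\in in(H)$, $y\in out(H)$ there is a path from $x$ to $y$. A left-connected rule is a span $L\xleftarrow{[i_L,o_L]}I+O\xrightarrow{[i_R,o_R]}R$ with $I,O$ discrete, $I\to L\leftarrow O$ and $I\to R\leftarrow O$ ma-cospans, $[i_L,o_L]$ mono and $L$ strongly connected; a left-connected rewriting system is a finite set of such rules. A convex match is a mono $m\colon L\to G$ such that every path in $G$ between two nodes of $m(L)$ has all its hyperedges in $m(L)$. A derivation between ma-cospans $n\to G\leftarrow m$ and $n\to H\leftarrow m$ via a rule $L\leftarrow K\to R$ is given by a convex match $L\to G$ and a double-pushout diagram $L\leftarrow K\to R$ over $G\leftarrow C\to H$ with both squares pushouts (the left one a boundary complement, which is automatic for left-connected systems) commuting with the interface $n+m$; for left-connected systems mono matches are automatically convex and pushout complements exist uniquely. A pre-critical pair consists of two derivations, via rules with left-hand sides $L_1,L_2$, from a common ma-cospan $n\to S\leftarrow m$ with matches $m_1,m_2$ such that $[m_1,m_2]\colon L_1+L_2\to S$ is epi. A gluing scheme for $L_1,L_2$ is a $\Sigma$-hypergraph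 $G$ with morphisms $g_1,g_2\colon G\to L_1+L_2$; its gluing is the coequaliser $\epsilon\colon L_1+L_2\to S=\mathtt{coeq}(g_1,g_2)$. Two nodes (or hyperedges) $x,x'$ of $L_1+L_2$ are glued if some node (hyperedge) $y$ of $G$ has $g_1(y)=x$, $g_2(y)=x'$. The gluing scheme yields a pre-critical pair if $\iota_1;\epsilon$ and $\iota_2;\epsilon$ are mono and $in(S)\xrightarrow{\subseteq}S\xleftarrow{\subseteq}out(S)$ is an ma-cospan; the pre-critical pair is then formed by the (unique) derivations from this ma-cospan with matches $\iota_1;\epsilon$ and $\iota_2;\epsilon$. *)

theory Defs
  imports Main
begin

record ('v, 'e, 'l) hyp =
  nodes :: "'v set"
  edges :: "'e set"
  src   :: "'e \<Rightarrow> 'v list"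
  tgt   :: "'e \<Rightarrow> 'v list"
  lab   :: "'e \<Rightarrow> 'l"

type_synonym 'l signature = "('l \<times> nat \<times> nat) set"

definition hypergraph :: "'l signature \<Rightarrow> ('v, 'e, 'l) hyp \<Rightarrow> bool" where
  "hypergraph Sig H \<longleftrightarrow> finite (nodes H) \<and> finite (edges H) \<and>
     (\<forall>e\<in>edges H. set (src H e) \<subseteq> nodes H \<and> set (tgt H e) \<subseteq> nodes H \<and>
        (lab H e, length (src H e), length (tgt H e)) \<in> Sig)"

definition hom :: "('v, 'e, 'l) hyp \<Rightarrow> ('w, 'f, 'l) hyp \<Rightarrow> ('v \<Rightarrow> 'w) \<Rightarrow> ('e \<Rightarrow> 'f) \<Rightarrow> bool" where
  "hom G H fV fE \<longleftrightarrow> fV ` nodes G \<subseteq> nodes H \<and> fE ` edges G \<subseteq> edges H \<and>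
     (\<forall>e\<in>edges G. src H (fE e) = map fV (src G e) \<and> tgt H (fE e) = map fV (tgt G e) \<and>
        lab H (fE e) = lab G e)"

definition mono_hom :: "('v, 'e, 'l) hyp \<Rightarrow> ('w, 'f, 'l) hyp \<Rightarrow> ('v \<Rightarrow> 'w) \<Rightarrow> ('e \<Rightarrow> 'f) \<Rightarrow> bool" where
  "mono_hom G H fV fE \<longleftrightarrow> hom G H fV fE \<and> inj_on fV (nodes G) \<and> inj_on fE (edges G)"

definition discrete :: "('v, 'e, 'l) hyp \<Rightarrow> bool" where
  "discrete H \<longleftrightarrow> edges H = {}"

definition discrete_on :: "'v set \<Rightarrow> ('v, 'e, 'l) hyp" where
  "discrete_on V = \<lparr>nodes = V, edges = {}, src = (\<lambda>_. []), tgt = (\<lambda>_. []), lab = (\<lambda>_. undefined)\<rparr>"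

definition hsum :: "('v, 'e, 'l) hyp \<Rightarrow> ('w, 'f, 'l) hyp \<Rightarrow> ('v + 'w, 'e + 'f, 'l) hyp" where
  "hsum G H = \<lparr>nodes = nodes G <+> nodes H, edges = edges G <+> edges H,
     src = case_sum (\<lambda>e. map Inl (src G e)) (\<lambda>e. map Inr (src H e)),
     tgt = case_sum (\<lambda>e. map Inl (tgt G e)) (\<lambda>e. map Inr (tgt H e)),
     lab = case_sum (lab G) (lab H)\<rparr>"

definition indeg :: "('v, 'e, 'l) hyp \<Rightarrow> 'v \<Rightarrow> nat" where
  "indeg H v = card {(e, i). e \<in> edges H \<and> i < length (tgt H e) \<and> tgt H e ! i = v}"

definition outdeg :: "('v, 'e, 'l) hyp \<Rightarrow> 'v \<Rightarrow> nat" where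
  "outdeg H v = card {(e, i). e \<in> edges H \<and> i < length (src H e) \<and> src H e ! i = v}"

definition in_nodes :: "('v, 'e, 'l) hyp \<Rightarrow> 'v set" where
  "in_nodes H = {v \<in> nodes H. indeg H v = 0}"

definition out_nodes :: "('v, 'e, 'l) hyp \<Rightarrow> 'v set" where
  "out_nodes H = {v \<in> nodes H. outdeg H v = 0}"

definition is_path :: "('v, 'e, 'l) hyp \<Rightarrow> 'e list \<Rightarrow> bool" where
  "is_path H es \<longleftrightarrow> es \<noteq> [] \<and> set es \<subseteq> edges H \<and>
     (\<forall>k. Suc k < length es \<longrightarrow> (\<exists>v. v \<in> set (tgt H (es ! k)) \<and> v \<in> set (src H (es ! Suc k))))"

definition path_from_to :: "('v, 'e, 'l) hyp \<Rightarrow> 'e list \<Rightarrow> 'v \<Rightarrow> 'v \<Rightarrow> bool" where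
  "path_from_to H es v v' \<longleftrightarrow> is_path H es \<and> v \<in> set (src H (hd es)) \<and> v' \<in> set (tgt H (last es))"

definition is_cycle :: "('v, 'e, 'l) hyp \<Rightarrow> 'e list \<Rightarrow> bool" where
  "is_cycle H es \<longleftrightarrow> is_path H es \<and> (\<exists>v. v \<in> set (src H (hd es)) \<and> v \<in> set (tgt H (last es)))"

definition hyp_acyclic :: "('v, 'e, 'l) hyp \<Rightarrow> bool" where
  "hyp_acyclic H \<longleftrightarrow> \<not> (\<exists>es. is_cycle H es)"

definition ma :: "('v, 'e, 'l) hyp \<Rightarrow> bool" where
  "ma H \<longleftrightarrow> hyp_acyclic H \<and> (\<forall>v\<in>nodes H. indeg H v \<le> 1 \<and> outdeg H v \<le> 1)"

definition strongly_connected :: "('v, 'e, 'l) hyp \<Rightarrow> bool" where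
  "strongly_connected H \<longleftrightarrow>
     (\<forall>x\<in>in_nodes H. \<forall>y\<in>out_nodes H. \<exists>es. path_from_to H es x y)"

text \<open>ma-cospan I -> H <- O. Since I and O are discrete, morphisms out of them are
determined by their node maps (the edge map, here the identity, acts on the empty set).\<close>

definition ma_cospan :: "('w, 'e, 'l) hyp \<Rightarrow> ('v, 'e, 'l) hyp \<Rightarrow> ('w, 'e, 'l) hyp \<Rightarrow>
    ('w \<Rightarrow> 'v) \<Rightarrow> ('w \<Rightarrow> 'v) \<Rightarrow> bool" where
  "ma_cospan I H Ou iV oV \<longleftrightarrow> discrete I \<and> discrete Ou \<and> ma H \<and>
     mono_hom I H iV id \<and> mono_hom Ou H oV id \<and>
     iV ` nodes I = in_nodes H \<and> oV ` nodes Ou = out_nodes H"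

record ('v, 'e, 'w, 'l) rule =
  lhs :: "('v, 'e, 'l) hyp"
  rhs :: "('v, 'e, 'l) hyp"
  ifc_in :: "('w, 'e, 'l) hyp"
  ifc_out :: "('w, 'e, 'l) hyp"
  iL :: "'w \<Rightarrow> 'v"
  oL :: "'w \<Rightarrow> 'v"
  iR :: "'w \<Rightarrow> 'v"
  oR :: "'w \<Rightarrow> 'v"

definition left_connected_rule :: "'l signature \<Rightarrow> ('v, 'e, 'w, 'l) rule \<Rightarrow> bool" where
  "left_connected_rule Sig r \<longleftrightarrow>
     hypergraph Sig (lhs r) \<and> hypergraph Sig (rhs r) \<and>
     hypergraph Sig (ifc_in r) \<and> hypergraph Sig (ifc_out r) \<and>
     discrete (ifc_in r) \<and> discrete (ifc_out r) \<and>
     ma_cospan (ifc_in r) (lhs r) (ifc_out r) (iL r) (oL r) \<and>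
     ma_cospan (ifc_in r) (rhs r) (ifc_out r) (iR r) (oR r) \<and>
     mono_hom (hsum (ifc_in r) (ifc_out r)) (lhs r) (case_sum (iL r) (oL r)) (case_sum id id) \<and>
     hom (hsum (ifc_in r) (ifc_out r)) (rhs r) (case_sum (iR r) (oR r)) (case_sum id id) \<and>
     strongly_connected (lhs r)"

definition left_connected_system :: "'l signature \<Rightarrow> ('v, 'e, 'w, 'l) rule set \<Rightarrow> bool" where
  "left_connected_system Sig Rs \<longleftrightarrow> finite Rs \<and> (\<forall>r\<in>Rs. left_connected_rule Sig r)"

definition gluing_scheme :: "'l signature \<Rightarrow> ('u, 'f, 'l) hyp \<Rightarrow> ('v, 'e, 'l) hyp \<Rightarrow> ('v, 'e, 'l) hyp \<Rightarrow>
    ('u \<Rightarrow> 'v + 'v) \<Rightarrow> ('f \<Rightarrow> 'e + 'e) \<Rightarrow> ('u \<Rightarrow> 'v + 'v) \<Rightarrow> ('f \<Rightarrow> 'e + 'e) \<Rightarrow> bool" where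
  "gluing_scheme Sig G L1 L2 g1V g1E g2V g2E \<longleftrightarrow> hypergraph Sig G \<and>
     hom G (hsum L1 L2) g1V g1E \<and> hom G (hsum L1 L2) g2V g2E"

definition glue_rel :: "'u set \<Rightarrow> ('u \<Rightarrow> 'a) \<Rightarrow> ('u \<Rightarrow> 'a) \<Rightarrow> ('a \<times> 'a) set" where
  "glue_rel Y g1 g2 = {(g1 y, g2 y) | y. y \<in> Y}"

definition cls :: "('a \<times> 'a) set \<Rightarrow> 'a \<Rightarrow> 'a set" where
  "cls R x = {x'. (x, x') \<in> (R \<union> R\<inverse>)\<^sup>*}"

text \<open>The coequaliser, computed componentwise as a quotient; the coequalising map is
cls (on nodes and on hyperedges).\<close>
definition coeq :: "('u, 'f, 'l) hyp \<Rightarrow> ('a, 'b, 'l) hyp \<Rightarrow>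
    ('u \<Rightarrow> 'a) \<Rightarrow> ('f \<Rightarrow> 'b) \<Rightarrow> ('u \<Rightarrow> 'a) \<Rightarrow> ('f \<Rightarrow> 'b) \<Rightarrow> ('a set, 'b set, 'l) hyp" where
  "coeq G H g1V g1E g2V g2E =
     (let RV = glue_rel (nodes G) g1V g2V; RE = glue_rel (edges G) g1E g2E in
      \<lparr>nodes = cls RV ` nodes H, edges = cls RE ` edges H,
       src = (\<lambda>c. map (cls RV) (src H (SOME e. e \<in> c))),
       tgt = (\<lambda>c. map (cls RV) (tgt H (SOME e. e \<in> c))),
       lab = (\<lambda>c. lab H (SOME e. e \<in> c))\<rparr>)"

definition yields_pcp :: "('u, 'f, 'l) hyp \<Rightarrow> ('v, 'e, 'l) hyp \<Rightarrow> ('v, 'e, 'l) hyp \<Rightarrow>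
    ('u \<Rightarrow> 'v + 'v) \<Rightarrow> ('f \<Rightarrow> 'e + 'e) \<Rightarrow> ('u \<Rightarrow> 'v + 'v) \<Rightarrow> ('f \<Rightarrow> 'e + 'e) \<Rightarrow> bool" where
  "yields_pcp G L1 L2 g1V g1E g2V g2E \<longleftrightarrow>
     (let S = coeq G (hsum L1 L2) g1V g1E g2V g2E;
          epsV = cls (glue_rel (nodes G) g1V g2V);
          epsE = cls (glue_rel (edges G) g1E g2E) in
      mono_hom L1 S (epsV \<circ> Inl) (epsE \<circ> Inl) \<and>
      mono_hom L2 S (epsV \<circ> Inr) (epsE \<circ> Inr) \<and>
      ma_cospan (discrete_on (in_nodes S)) S (discrete_on (out_nodes S)) id id)"

definition glued :: "'u set \<Rightarrow> ('u \<Rightarrow> 'a) \<Rightarrow> ('u \<Rightarrow> 'a) \<Rightarrow> 'a \<Rightarrow> 'a \<Rightarrow> bool" where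
  "glued Y g1 g2 x x' \<longleftrightarrow> (\<exists>y\<in>Y. g1 y = x \<and> g2 y = x')"

end

theory Submission
  imports Defs
begin

(* Gluing A with B identifies them in the gluing S, which is monogamous. If A and B are both
   sources of hyperedges e1 of L1 and e2 of L2, the images of these two source occurrences are
   occurrences of one node of S, so they coincide: e1 and e2 become the same hyperedge of S, at
   the same source position. Since L1 and L2 embed into S, the chain of gluings identifying e1
   with e2 can only pass from the L1-side to the L2-side by gluing e1 with e2 directly. Targets
   are handled by reversing all hyperedges. Otherwise one of A, B has no outgoing and the other
   no incoming hyperedge; as no node of a strongly connected left-hand side is both an input and
   an output, this forces (c) or (d). *)

lemma rtrancl_crossing_step:
  assumes "(x, z) \<in> r\<^sup>*" and "P x" and "\<not> P z"
  shows "\<exists>y y'. (x, y) \<in> r\<^sup>* \<and> P y \<and> (y, y') \<in> r \<and> \<not> P y'"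
  using assms(1,3)
proof (induction rule: rtrancl_induct)
  case base
  with assms(2) show ?case by simp
next
  case (step z w)
  then show ?case
    by (cases "P z") auto
qed

lemma cls_eq_iff: "cls R x = cls R y \<longleftrightarrow> (x, y) \<in> (R \<union> R\<inverse>)\<^sup>*"
proof
  assume "cls R x = cls R y"
  then show "(x, y) \<in> (R \<union> R\<inverse>)\<^sup>*"
    by (metis cls_def mem_Collect_eq rtrancl.rtrancl_refl)
next
  have "sym ((R \<union> R\<inverse>)\<^sup>*)"
    by (intro sym_rtrancl) (auto simp: sym_def)
  moreover assume "(x, y) \<in> (R \<union> R\<inverse>)\<^sup>*"
  ultimately show "cls R x = cls R y"
    unfolding cls_def by (blast dest: symD intro: rtrancl_trans)
qed

lemma glued_iff_glue_rel: "glued Y g1 g2 x x' \<longleftrightarrow> (x, x') \<in> glue_rel Y g1 g2"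
  by (auto simp: glued_def glue_rel_def)

lemma cls_eq_if_glued:
  "glued Y g1 g2 x x' \<Longrightarrow> cls (glue_rel Y g1 g2) x = cls (glue_rel Y g1 g2) x'"
  by (auto simp: cls_eq_iff glued_iff_glue_rel)

lemma glued_if_cls_Inl_eq_cls_Inr:
  fixes Y :: "'u set" and g1 g2 :: "'u \<Rightarrow> 'a + 'b"
  defines "R \<equiv> glue_rel Y g1 g2"
  assumes "g1 ` Y \<subseteq> D1 <+> D2" and "g2 ` Y \<subseteq> D1 <+> D2"
    and inj1: "inj_on (cls R \<circ> Inl) D1" and inj2: "inj_on (cls R \<circ> Inr) D2"
    and "a \<in> D1" and "b \<in> D2" and eq: "cls R (Inl a) = cls R (Inr b)"
  shows "glued Y g1 g2 (Inl a) (Inr b) \<or> glued Y g1 g2 (Inr b) (Inl a)"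
proof -
  have field: "R \<union> R\<inverse> \<subseteq> (D1 <+> D2) \<times> (D1 <+> D2)"
    using assms(2,3) by (auto simp: R_def glue_rel_def)
  from eq have "(Inl a, Inr b) \<in> (R \<union> R\<inverse>)\<^sup>*"
    by (simp add: cls_eq_iff)
  \<comment> \<open>by injectivity on both summands, the first step of the chain from the L1-side to the
    L2-side must go from Inl a to Inr b\<close>
  then obtain y y' where reach: "(Inl a, y) \<in> (R \<union> R\<inverse>)\<^sup>*" and step: "(y, y') \<in> R \<union> R\<inverse>"
    and "isl y" and "\<not> isl y'"
    using rtrancl_crossing_step[where P = isl] by fastforce
  then obtain a' c where y: "y = Inl a'" "a' \<in> D1" and y': "y' = Inr c" "c \<in> D2"
    using field by (cases y; cases y') auto
  from reach y have "cls R (Inl a) = cls R (Inl a')"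
    by (simp add: cls_eq_iff)
  with inj1 y \<open>a \<in> D1\<close> have "a' = a"
    by (metis comp_apply inj_onD)
  from reach step y' have "cls R (Inl a) = cls R (Inr c)"
    by (auto simp: cls_eq_iff intro: rtrancl_into_rtrancl)
  with eq inj2 y' \<open>b \<in> D2\<close> have "c = b"
    by (metis comp_apply inj_onD)
  with step y y' \<open>a' = a\<close> show ?thesis
    by (auto simp: glued_iff_glue_rel R_def)
qed

lemma finite_source_occurrences:
  assumes "finite (edges H)"
  shows "finite {(e, i). e \<in> edges H \<and> i < length (src H e) \<and> src H e ! i = v}"
  by (rule finite_subset[OF _ finite_SigmaI[OF assms, of "\<lambda>e. {..<length (src H e)}"]]) auto

lemma outdeg_eq_0_iff:
  assumes "finite (edges H)"
  shows "outdeg H v = 0 \<longleftrightarrow> (\<forall>e\<in>edges H. v \<notin> set (src H e))"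
  using finite_source_occurrences[OF assms] by (auto simp: outdeg_def in_set_conv_nth)

lemma outdeg_le_1_source_unique:
  assumes "finite (edges H)" and "outdeg H v \<le> 1"
    and "e \<in> edges H" "k < length (src H e)" "src H e ! k = v"
    and "e' \<in> edges H" "k' < length (src H e')" "src H e' ! k' = v"
  shows "e = e' \<and> k = k'"
  using finite_source_occurrences[OF assms(1)] assms(2-8) card_le_Suc0_iff_eq
  unfolding outdeg_def by fastforce

lemma in_nodes_disjoint_out_nodes:
  assumes "finite (edges H)" and "strongly_connected H"
  shows "in_nodes H \<inter> out_nodes H = {}"
proof (rule ccontr)
  assume "in_nodes H \<inter> out_nodes H \<noteq> {}"
  then obtain v where "v \<in> in_nodes H" and out: "v \<in> out_nodes H"
    by blast
  with assms(2) obtain es where "path_from_to H es v v"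
    by (auto simp: strongly_connected_def)
  then have "hd es \<in> edges H" and "v \<in> set (src H (hd es))"
    by (auto simp: path_from_to_def is_path_def)
  with assms(1) out show False
    by (auto simp: out_nodes_def outdeg_eq_0_iff)
qed

definition converse_hyp :: "('v, 'e, 'l) hyp \<Rightarrow> ('v, 'e, 'l) hyp" where
  "converse_hyp H = H\<lparr>src := tgt H, tgt := src H\<rparr>"

lemma converse_hyp_simps [simp]:
  "nodes (converse_hyp H) = nodes H" "edges (converse_hyp H) = edges H"
  "src (converse_hyp H) = tgt H" "tgt (converse_hyp H) = src H" "lab (converse_hyp H) = lab H"
  by (simp_all add: converse_hyp_def)

lemma outdeg_converse_hyp [simp]: "outdeg (converse_hyp H) = indeg H"
  by (simp add: outdeg_def indeg_def fun_eq_iff)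

lemma mono_hom_converse_hyp [simp]:
  "mono_hom (converse_hyp G) (converse_hyp H) fV fE \<longleftrightarrow> mono_hom G H fV fE"
  by (auto simp: mono_hom_def hom_def)

definition glued_incidence :: "'u set \<Rightarrow> ('u \<Rightarrow> 'e + 'e) \<Rightarrow> ('u \<Rightarrow> 'e + 'e) \<Rightarrow>
    (('v, 'e, 'l) hyp \<Rightarrow> 'e \<Rightarrow> 'v list) \<Rightarrow> ('v, 'e, 'l) hyp \<Rightarrow> ('v, 'e, 'l) hyp \<Rightarrow> 'v \<Rightarrow> 'v \<Rightarrow> bool" where
  "glued_incidence Y g1E g2E inc L1 L2 A B \<longleftrightarrow>
     (\<exists>e1\<in>edges L1. \<exists>e2\<in>edges L2.
        (glued Y g1E g2E (Inl e1) (Inr e2) \<or> glued Y g1E g2E (Inr e2) (Inl e1)) \<and>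
        (\<exists>k. k < length (inc L1 e1) \<and> k < length (inc L2 e2) \<and>
             inc L1 e1 ! k = A \<and> inc L2 e2 ! k = B))"

lemma glued_incidence_converse_hyp [simp]:
  "glued_incidence Y g1E g2E src (converse_hyp L1) (converse_hyp L2) A B \<longleftrightarrow>
   glued_incidence Y g1E g2E tgt L1 L2 A B"
  by (simp add: glued_incidence_def)

lemma glued_incidence_at_shared_source:
  fixes Y :: "'u set" and g1E g2E :: "'u \<Rightarrow> 'e + 'e"
  defines "\<epsilon>E \<equiv> cls (glue_rel Y g1E g2E)"
  assumes mono1: "mono_hom L1 S (fV \<circ> Inl) (\<epsilon>E \<circ> Inl)"
    and mono2: "mono_hom L2 S (fV \<circ> Inr) (\<epsilon>E \<circ> Inr)"
    and "g1E ` Y \<subseteq> edges L1 <+> edges L2" and "g2E ` Y \<subseteq> edges L1 <+> edges L2"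
    and "finite (edges L1)" "finite (edges L2)" "finite (edges S)"
    and "fV (Inl A) = fV (Inr B)" and "outdeg S (fV (Inl A)) \<le> 1"
    and "outdeg L1 A \<noteq> 0" and "outdeg L2 B \<noteq> 0"
  shows "glued_incidence Y g1E g2E src L1 L2 A B"
proof -
  obtain e1 k where e1: "e1 \<in> edges L1" "k < length (src L1 e1)" "src L1 e1 ! k = A"
    using assms(6,11) by (auto simp: outdeg_eq_0_iff in_set_conv_nth)
  obtain e2 j where e2: "e2 \<in> edges L2" "j < length (src L2 e2)" "src L2 e2 ! j = B"
    using assms(7,12) by (auto simp: outdeg_eq_0_iff in_set_conv_nth)
  have occ1: "\<epsilon>E (Inl e1) \<in> edges S" "k < length (src S (\<epsilon>E (Inl e1)))"
      "src S (\<epsilon>E (Inl e1)) ! k = fV (Inl A)"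
    using mono1 e1 by (auto simp: mono_hom_def hom_def)
  have occ2: "\<epsilon>E (Inr e2) \<in> edges S" "j < length (src S (\<epsilon>E (Inr e2)))"
      "src S (\<epsilon>E (Inr e2)) ! j = fV (Inl A)"
    using mono2 e2 \<open>fV (Inl A) = fV (Inr B)\<close> by (auto simp: mono_hom_def hom_def)
  have "\<epsilon>E (Inl e1) = \<epsilon>E (Inr e2)" and "k = j"
    using outdeg_le_1_source_unique[OF assms(8,10) occ1 occ2] by simp_all
  moreover have "inj_on (\<epsilon>E \<circ> Inl) (edges L1)" and "inj_on (\<epsilon>E \<circ> Inr) (edges L2)"
    using mono1 mono2 by (auto simp: mono_hom_def)
  ultimately have "glued Y g1E g2E (Inl e1) (Inr e2) \<or> glued Y g1E g2E (Inr e2) (Inl e1)"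
    using glued_if_cls_Inl_eq_cls_Inr[OF assms(4,5)] e1(1) e2(1) unfolding \<epsilon>E_def by simp
  with e1 e2 \<open>k = j\<close> show ?thesis
    unfolding glued_incidence_def by blast
qed

lemma yields_pcp_glued_incidence:
  assumes "gluing_scheme Sig G L1 L2 g1V g1E g2V g2E" and "yields_pcp G L1 L2 g1V g1E g2V g2E"
    and "finite (edges L1)" "finite (edges L2)" and "A \<in> nodes L1"
    and "glued (nodes G) g1V g2V (Inl A) (Inr B) \<or> glued (nodes G) g1V g2V (Inr B) (Inl A)"
  shows "outdeg L1 A \<noteq> 0 \<Longrightarrow> outdeg L2 B \<noteq> 0 \<Longrightarrow> glued_incidence (edges G) g1E g2E src L1 L2 A B"
    and "indeg L1 A \<noteq> 0 \<Longrightarrow> indeg L2 B \<noteq> 0 \<Longrightarrow> glued_incidence (edges G) g1E g2E tgt L1 L2 A B"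
proof -
  define S where "S = coeq G (hsum L1 L2) g1V g1E g2V g2E"
  define \<epsilon>V where "\<epsilon>V = cls (glue_rel (nodes G) g1V g2V)"
  let ?\<epsilon>E = "cls (glue_rel (edges G) g1E g2E)"
  have fin: "finite (edges S)"
    using assms(3,4) by (simp add: S_def coeq_def hsum_def Let_def)
  have mono: "mono_hom L1 S (\<epsilon>V \<circ> Inl) (?\<epsilon>E \<circ> Inl)" "mono_hom L2 S (\<epsilon>V \<circ> Inr) (?\<epsilon>E \<circ> Inr)"
    and "ma S"
    using assms(2) by (auto simp: yields_pcp_def S_def \<epsilon>V_def Let_def ma_cospan_def)
  moreover have "\<epsilon>V (Inl A) \<in> nodes S"
    using mono(1) assms(5) by (auto simp: mono_hom_def hom_def)
  ultimately have deg: "outdeg S (\<epsilon>V (Inl A)) \<le> 1" "indeg S (\<epsilon>V (Inl A)) \<le> 1"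
    by (auto simp: ma_def)
  have img: "g1E ` edges G \<subseteq> edges L1 <+> edges L2" "g2E ` edges G \<subseteq> edges L1 <+> edges L2"
    using assms(1) by (auto simp: gluing_scheme_def hom_def hsum_def)
  have AB_identified: "\<epsilon>V (Inl A) = \<epsilon>V (Inr B)"
    using assms(6) cls_eq_if_glued unfolding \<epsilon>V_def by metis
  show "outdeg L1 A \<noteq> 0 \<Longrightarrow> outdeg L2 B \<noteq> 0 \<Longrightarrow> glued_incidence (edges G) g1E g2E src L1 L2 A B"
    using glued_incidence_at_shared_source[OF mono img assms(3,4) fin AB_identified deg(1)] .
  from mono have "mono_hom (converse_hyp L1) (converse_hyp S) (\<epsilon>V \<circ> Inl) (?\<epsilon>E \<circ> Inl)"
    "mono_hom (converse_hyp L2) (converse_hyp S) (\<epsilon>V \<circ> Inr) (?\<epsilon>E \<circ> Inr)"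
    by simp_all
  from glued_incidence_at_shared_source[OF this, unfolded converse_hyp_simps outdeg_converse_hyp,
      OF img assms(3,4) fin AB_identified deg(2)]
  show "indeg L1 A \<noteq> 0 \<Longrightarrow> indeg L2 B \<noteq> 0 \<Longrightarrow> glued_incidence (edges G) g1E g2E tgt L1 L2 A B"
    by simp
qed

theorem mainTheorem2:
  fixes Sig :: "'l signature" and Rs :: "('v, 'e, 'w, 'l) rule set"
    and r1 r2 :: "('v, 'e, 'w, 'l) rule"
    and G :: "('u, 'f, 'l) hyp"
    and g1V g2V :: "'u \<Rightarrow> 'v + 'v" and g1E g2E :: "'f \<Rightarrow> 'e + 'e"
    and A B :: 'v
  assumes "left_connected_system Sig Rs" and "r1 \<in> Rs" and "r2 \<in> Rs"
    and "gluing_scheme Sig G (lhs r1) (lhs r2) g1V g1E g2V g2E"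
    and "yields_pcp G (lhs r1) (lhs r2) g1V g1E g2V g2E"
    and "A \<in> nodes (lhs r1)" and "B \<in> nodes (lhs r2)"
    and "glued (nodes G) g1V g2V (Inl A) (Inr B) \<or> glued (nodes G) g1V g2V (Inr B) (Inl A)"
  shows "(\<exists>e1\<in>edges (lhs r1). \<exists>e2\<in>edges (lhs r2).
            (glued (edges G) g1E g2E (Inl e1) (Inr e2) \<or> glued (edges G) g1E g2E (Inr e2) (Inl e1)) \<and>
            (\<exists>k. k < length (src (lhs r1) e1) \<and> k < length (src (lhs r2) e2) \<and>
                 src (lhs r1) e1 ! k = A \<and> src (lhs r2) e2 ! k = B))
       \<or> (\<exists>e1\<in>edges (lhs r1). \<exists>e2\<in>edges (lhs r2).
            (glued (edges G) g1E g2E (Inl e1) (Inr e2) \<or> glued (edges G) g1E g2E (Inr e2) (Inl e1)) \<and>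
            (\<exists>i. i < length (tgt (lhs r1) e1) \<and> i < length (tgt (lhs r2) e2) \<and>
                 tgt (lhs r1) e1 ! i = A \<and> tgt (lhs r2) e2 ! i = B))
       \<or> (A \<in> out_nodes (lhs r1) \<and> B \<in> in_nodes (lhs r2))
       \<or> (A \<in> in_nodes (lhs r1) \<and> B \<in> out_nodes (lhs r2))"
proof -
  have "left_connected_rule Sig r1" and "left_connected_rule Sig r2"
    using assms(1-3) by (auto simp: left_connected_system_def)
  then have fin: "finite (edges (lhs r1))" "finite (edges (lhs r2))"
    and "strongly_connected (lhs r1)" "strongly_connected (lhs r2)"
    by (auto simp: left_connected_rule_def hypergraph_def)
  then have "A \<notin> in_nodes (lhs r1) \<inter> out_nodes (lhs r1)" "B \<notin> in_nodes (lhs r2) \<inter> out_nodes (lhs r2)"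
    using in_nodes_disjoint_out_nodes by blast+
  then consider "outdeg (lhs r1) A \<noteq> 0 \<and> outdeg (lhs r2) B \<noteq> 0"
    | "indeg (lhs r1) A \<noteq> 0 \<and> indeg (lhs r2) B \<noteq> 0"
    | "A \<in> out_nodes (lhs r1) \<and> B \<in> in_nodes (lhs r2)"
    | "A \<in> in_nodes (lhs r1) \<and> B \<in> out_nodes (lhs r2)"
    using assms(6,7) unfolding in_nodes_def out_nodes_def Int_iff mem_Collect_eq by meson
  then show ?thesis
    using yields_pcp_glued_incidence[OF assms(4,5) fin assms(6,8)]
    unfolding glued_incidence_def by metis
qed

end
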